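(* Let $V=\{1,\dots,n\}$ and let $W=(w_1,\dots,w_m)\in V^m$ be a sequence such that each element of $V$ appears in $W$ at least once and any three consecutive elements of $W$ are distinct. Then the set of 3-cycles $\mathcal{C}=\{(w_{i-1}\ w_i\ w_{i+1}) : 1<i<m\}$ can generate any even permutation of $V$ in $O(n^3)$ shifts; that is, there is an absolute constant $K$ (independent of $m$ and $W$) such that every even permutation of $V$ is a product of at most $Kn^3$ factors, each being an element of $\mathcal{C}$ or the inverse of one.
   Context: Permutations are written in cycle notation; $(x\ y\ z)$ denotes the 3-cycle sending $x\mapsto y\mapsto z\mapsto x$. *)

theory Defs
  imports "HOL-Combinatorics.Combinatorics"
begin

text \<open>The 3-cycle (x y z): x \<mapsto> y \<mapsto> z \<mapsto> x.\<close>
definition cyc3 :: "nat \<Rightarrow> nat \<Rightarrow> nat \<Rightarrow> (nat \<Rightarrow> nat)" where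
  "cyc3 x y z = cycle_of_list [x, y, z]"

text \<open>Generating set C = {(w_{i-1} w_i w_{i+1}) : 1 < i < m}; the list W is 0-indexed,
  so paper index i corresponds to list position i - 1.\<close>
definition gens :: "nat list \<Rightarrow> (nat \<Rightarrow> nat) set" where
  "gens W = {cyc3 (W ! (i - 1)) (W ! i) (W ! (i + 1)) | i. 0 < i \<and> i + 1 < length W}"

end

theory Submission
  imports Defs
begin

(* Induct over the prefixes W_k = {w_1, ..., w_k} of W, using only those generators and inverses
   that permute W_k. A new point w_k is sent to w_(k-2) by (w_(k-2) w_(k-1) w_k), so every point of
   W_k is carried to w_1 by a word of length at most |W_k|, and any two points of W_k are joined by
   a word of length at most 2 |W_k|. If p is an even permutation of W_(k+1) and w_k is new, pick
   such a word h with h (p w_k) = w_k: then h o p is an even permutation of W_k, and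
   p = h^-1 o (h o p). The recursion L(c+1) <= L(c) + 2 (c+1) for the word length gives
   L(c) <= 3 c^2, so K = 3 suffices. *)

section \<open>Products of boundedly many factors\<close>

definition products :: "('a \<Rightarrow> 'a) set \<Rightarrow> nat \<Rightarrow> ('a \<Rightarrow> 'a) set" where
  "products A L = {foldr (\<circ>) fs id | fs. set fs \<subseteq> A \<and> length fs \<le> L}"

lemma foldr_comp_append: "foldr (\<circ>) (fs @ gs) id = foldr (\<circ>) fs id \<circ> foldr (\<circ>) gs id"
  by (induction fs) auto

lemma productsI: "set fs \<subseteq> A \<Longrightarrow> length fs \<le> L \<Longrightarrow> foldr (\<circ>) fs id \<in> products A L"
  unfolding products_def by blast

lemma products_id: "id \<in> products A L"
  using productsI[of "[]"] by simp

lemma products_single: "a \<in> A \<Longrightarrow> a \<in> products A 1"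
  using productsI[of "[a]"] by simp

lemma products_mono: "A \<subseteq> B \<Longrightarrow> L \<le> M \<Longrightarrow> products A L \<subseteq> products B M"
  unfolding products_def by fastforce

lemma products_comp:
  assumes "f \<in> products A L" "g \<in> products A M"
  shows "f \<circ> g \<in> products A (L + M)"
proof -
  obtain fs gs where "f = foldr (\<circ>) fs id" "g = foldr (\<circ>) gs id"
    "set fs \<subseteq> A" "length fs \<le> L" "set gs \<subseteq> A" "length gs \<le> M"
    using assms unfolding products_def by blast
  then show ?thesis
    using productsI[of "fs @ gs" A "L + M"] by (simp add: foldr_comp_append del: foldr_append)
qed

lemma inv_foldr_comp:
  assumes "\<And>f. f \<in> set fs \<Longrightarrow> bij f"
  shows "inv (foldr (\<circ>) fs id) = foldr (\<circ>) (rev (map inv fs)) id"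
  using assms
proof (induction fs)
  case (Cons f fs)
  have "bij (foldr (\<circ>) fs id)"
    using Cons.prems by (induction fs) (auto intro: bij_comp)
  then have "inv (foldr (\<circ>) (f # fs) id) = inv (foldr (\<circ>) fs id) \<circ> inv f"
    using Cons.prems by (simp add: o_inv_distrib)
  also have "\<dots> = foldr (\<circ>) (rev (map inv fs)) id \<circ> foldr (\<circ>) [inv f] id"
    using Cons.prems by (subst Cons.IH) auto
  also have "\<dots> = foldr (\<circ>) (rev (map inv (f # fs))) id"
    by (simp only: foldr_comp_append rev.simps list.map)
  finally show ?case .
qed simp

lemma products_inv:
  assumes "\<And>a. a \<in> A \<Longrightarrow> bij a \<and> inv a \<in> A" "f \<in> products A L"
  shows "inv f \<in> products A L"
proof -
  obtain fs where fs: "f = foldr (\<circ>) fs id" "set fs \<subseteq> A" "length fs \<le> L"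
    using assms(2) unfolding products_def by blast
  have "set (rev (map inv fs)) \<subseteq> A"
    using fs(2) assms(1) by auto
  then show ?thesis
    using fs assms(1) productsI[of "rev (map inv fs)"] inv_foldr_comp[of fs] by (simp add: subset_iff)
qed

lemma products_induct:
  assumes "h \<in> products A L"
    and "P id" "\<And>f g. P f \<Longrightarrow> P g \<Longrightarrow> P (f \<circ> g)" "\<And>a. a \<in> A \<Longrightarrow> P a"
  shows "P h"
proof -
  obtain fs where "h = foldr (\<circ>) fs id" "set fs \<subseteq> A"
    using assms(1) unfolding products_def by blast
  then show ?thesis
    using assms(2-4) by (induction fs arbitrary: h) auto
qed

lemma products_permutes_even:
  assumes "\<And>a. a \<in> A \<Longrightarrow> a permutes S \<and> evenperm a" "finite S" "h \<in> products A L"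
  shows "h permutes S \<and> evenperm h"
  using assms(3)
proof (rule products_induct[where P = "\<lambda>h. h permutes S \<and> evenperm h"])
  show "\<And>f g. f permutes S \<and> evenperm f \<Longrightarrow> g permutes S \<and> evenperm g \<Longrightarrow>
      f \<circ> g permutes S \<and> evenperm (f \<circ> g)"
    using assms(2) by (simp add: permutes_compose evenperm_comp permutes_imp_permutation)
qed (use assms(1) in auto)

lemma even_products_insert:
  assumes "finite S"
    and A: "\<And>a. a \<in> A \<Longrightarrow> a permutes insert v S \<and> evenperm a \<and> inv a \<in> A"
    and reach: "\<And>y. y \<in> insert v S \<Longrightarrow> \<exists>h\<in>products A L. h y = v"
    and base: "\<And>r. r permutes S \<Longrightarrow> evenperm r \<Longrightarrow> r \<in> products A M"
    and p: "p permutes insert v S" "evenperm p"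
  shows "p \<in> products A (L + M)"
proof -
  have fin: "finite (insert v S)"
    using \<open>finite S\<close> by simp
  obtain h where h: "h \<in> products A L" "h (p v) = v"
    using reach permutes_in_image[OF p(1)] by blast
  have h_even: "h permutes insert v S \<and> evenperm h"
    using products_permutes_even[OF _ fin h(1)] A by blast
  have "h \<circ> p permutes insert v S"
    using p(1) h_even by (blast intro: permutes_compose)
  then have "h \<circ> p permutes S"
    by (rule permutes_superset) (use h(2) in auto)
  moreover have "evenperm (h \<circ> p)"
    using h_even p permutes_imp_permutation[OF fin] by (simp add: evenperm_comp)
  ultimately have "h \<circ> p \<in> products A M"
    by (rule base)
  moreover have "inv h \<in> products A L"
    using products_inv[OF _ h(1)] A permutes_bij by blast
  moreover have "p = inv h \<circ> (h \<circ> p)"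
    using permutes_inv_o(2)[of h "insert v S"] h_even by (simp add: o_assoc)
  ultimately show ?thesis
    by (metis products_comp)
qed

section \<open>Even permutations and shifts\<close>

lemma evenperm_permutes_doubleton: "p permutes {a, b} \<Longrightarrow> evenperm p \<Longrightarrow> p = id"
  by (auto simp: permutes_doubleton_iff evenperm_swap)

lemma cyc3_permutes: "cyc3 a b c permutes {a, b, c}"
  unfolding cyc3_def using cycle_permutes[of "[a, b, c]"] by simp

lemma evenperm_cyc3: "distinct [a, b, c] \<Longrightarrow> evenperm (cyc3 a b c)"
  unfolding cyc3_def by (simp add: evenperm_comp permutation_swap_id evenperm_swap)

lemma cyc3_apply:
  assumes "distinct [a, b, c]"
  shows "cyc3 a b c a = b" "cyc3 a b c b = c" "cyc3 a b c c = a"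
  using assms by (auto simp: cyc3_def transpose_def)

lemma permutation_cyc3: "permutation (cyc3 a b c)"
  unfolding cyc3_def by (rule permutation_of_cycle)

lemma gens_eq: "gens W = {cyc3 (W ! i) (W ! (i + 1)) (W ! (i + 2)) | i. i + 2 < length W}"
  unfolding gens_def
proof (intro set_eqI iffI; elim CollectE exE conjE)
  fix c i
  assume "c = cyc3 (W ! (i - 1)) (W ! i) (W ! (i + 1))" "0 < i" "i + 1 < length W"
  then show "c \<in> {cyc3 (W ! i) (W ! (i + 1)) (W ! (i + 2)) | i. i + 2 < length W}"
    by (intro CollectI exI[of _ "i - 1"]) (simp add: numeral_2_eq_2)
next
  fix c i
  assume "c = cyc3 (W ! i) (W ! (i + 1)) (W ! (i + 2))" "i + 2 < length W"
  then show "c \<in> {cyc3 (W ! (i - 1)) (W ! i) (W ! (i + 1)) | i. 0 < i \<and> i + 1 < length W}"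
    by (intro CollectI exI[of _ "i + 1"]) (simp add: numeral_2_eq_2)
qed

definition shifts :: "nat list \<Rightarrow> nat set \<Rightarrow> (nat \<Rightarrow> nat) set" where
  "shifts W S = {f \<in> gens W \<union> inv ` gens W. f permutes S}"

lemma shifts_mono: "S \<subseteq> T \<Longrightarrow> shifts W S \<subseteq> shifts W T"
  unfolding shifts_def by (auto intro: permutes_subset)

lemma cyc3_in_shifts:
  assumes "i + 2 < length W" "{W ! i, W ! (i + 1), W ! (i + 2)} \<subseteq> S"
  shows "cyc3 (W ! i) (W ! (i + 1)) (W ! (i + 2)) \<in> shifts W S"
proof -
  have "cyc3 (W ! i) (W ! (i + 1)) (W ! (i + 2)) \<in> gens W"
    unfolding gens_eq using assms(1) by blast
  moreover have "cyc3 (W ! i) (W ! (i + 1)) (W ! (i + 2)) permutes S"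
    using cyc3_permutes assms(2) by (rule permutes_subset)
  ultimately show ?thesis
    unfolding shifts_def by blast
qed

section \<open>Prefixes of a sequence with distinct consecutive triples\<close>

locale triple_distinct =
  fixes W :: "nat list"
  assumes distinct_triple: "i + 2 < length W \<Longrightarrow> distinct [W ! i, W ! (i + 1), W ! (i + 2)]"
begin

abbreviation prefix_set :: "nat \<Rightarrow> nat set" where
  "prefix_set k \<equiv> set (take k W)"

lemma prefix_set_Suc: "k < length W \<Longrightarrow> prefix_set (Suc k) = insert (W ! k) (prefix_set k)"
  by (simp add: take_Suc_conv_app_nth)

lemma nth_in_prefix_set: "i < k \<Longrightarrow> i < length W \<Longrightarrow> W ! i \<in> prefix_set k"
  by (metis in_set_conv_nth length_take min_less_iff_conj nth_take)

lemma gens_evenperm: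
  assumes "c \<in> gens W"
  shows "permutation c \<and> evenperm c"
proof -
  obtain i where "c = cyc3 (W ! i) (W ! (i + 1)) (W ! (i + 2))" "i + 2 < length W"
    using assms unfolding gens_eq by blast
  then show ?thesis
    using distinct_triple evenperm_cyc3 permutation_cyc3 by simp
qed

lemma shifts_closed:
  assumes "f \<in> shifts W S"
  shows "f permutes S \<and> evenperm f \<and> inv f \<in> shifts W S"
proof -
  have f: "f permutes S" "f \<in> gens W \<union> inv ` gens W"
    using assms unfolding shifts_def by auto
  have "evenperm f"
    using f(2) gens_evenperm evenperm_inv by auto
  moreover have "inv f \<in> gens W \<union> inv ` gens W"
    using f(2) gens_evenperm by (auto simp: inv_inv_eq permutation_bijective)
  moreover have "inv f permutes S"
    using f(1) by (rule permutes_inv)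
  ultimately show ?thesis
    using f unfolding shifts_def by blast
qed

lemma prefix3_reaches_head:
  assumes "3 \<le> length W" "y \<in> prefix_set 3"
  shows "\<exists>h\<in>products (shifts W (prefix_set 3)) (card (prefix_set 3)). h y = W ! 0"
proof -
  let ?g = "cyc3 (W ! 0) (W ! 1) (W ! 2)" and ?A = "shifts W (prefix_set 3)"
  have "take 3 W = [W ! 0, W ! 1, W ! 2]"
    using assms(1)
    by (intro nth_equalityI) (auto simp: less_Suc_eq numeral_3_eq_3 numeral_2_eq_2)
  then have S: "prefix_set 3 = {W ! 0, W ! 1, W ! 2}"
    by simp
  have d: "distinct [W ! 0, W ! 1, W ! 2]"
    using distinct_triple[of 0] assms(1) by (simp add: numeral_2_eq_2)
  have "?g \<in> ?A"
    using cyc3_in_shifts[of 0 W] assms(1) S by (simp add: numeral_2_eq_2)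
  then have g: "?g \<in> products ?A 1"
    by (rule products_single)
  have card: "card (prefix_set 3) = 3"
    using d S by simp
  have g3: "?g \<in> products ?A (card (prefix_set 3))"
    using products_mono[of ?A ?A 1 3] g card by auto
  have gg3: "?g \<circ> ?g \<in> products ?A (card (prefix_set 3))"
    using products_mono[of ?A ?A "1 + 1" 3] products_comp[OF g g] card by auto
  have "y = W ! 0 \<or> y = W ! 2 \<or> y = W ! 1"
    using assms(2) S by blast
  then show ?thesis
  proof (elim disjE)
    assume "y = W ! 0"
    then show ?thesis
      by (intro bexI[OF _ products_id]) simp
  next
    assume "y = W ! 2"
    then show ?thesis
      using d by (intro bexI[OF _ g3]) (simp add: cyc3_apply)
  next
    assume "y = W ! 1"
    then show ?thesis
      using d by (intro bexI[OF _ gg3]) (simp add: cyc3_apply)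
  qed
qed

lemma prefix_reaches_head_Suc:
  assumes "3 \<le> k" "k < length W"
    and IH: "\<And>z. z \<in> prefix_set k \<Longrightarrow>
      \<exists>h\<in>products (shifts W (prefix_set k)) (card (prefix_set k)). h z = W ! 0"
    and "y \<in> prefix_set (Suc k)"
  shows "\<exists>h\<in>products (shifts W (prefix_set (Suc k))) (card (prefix_set (Suc k))). h y = W ! 0"
proof -
  let ?S = "prefix_set k" and ?S' = "prefix_set (Suc k)"
  have S': "?S' = insert (W ! k) ?S"
    using assms(2) by (rule prefix_set_Suc)
  have sub: "shifts W ?S \<subseteq> shifts W ?S'"
    by (rule shifts_mono) (auto simp: S')
  show ?thesis
  proof (cases "y \<in> ?S")
    case True
    then show ?thesis
      using IH[of y] products_mono[OF sub card_mono[of ?S' ?S]] by (auto simp: S')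
  next
    case False
    then have y: "y = W ! k" "W ! k \<notin> ?S"
      using assms(4) S' by auto
    define i where "i = k - 2"
    have i: "k = i + 2"
      using assms(1) by (simp add: i_def)
    let ?g = "cyc3 (W ! i) (W ! (i + 1)) (W ! k)"
    have d: "distinct [W ! i, W ! (i + 1), W ! k]"
      using distinct_triple[of i] i assms(2) by simp
    have "{W ! i, W ! (i + 1), W ! (i + 2)} \<subseteq> ?S'"
      using nth_in_prefix_set i assms(2) by simp
    then have "?g \<in> shifts W ?S'"
      using cyc3_in_shifts[of i W ?S'] i assms(2) by simp
    then have g: "?g \<in> products (shifts W ?S') 1"
      by (rule products_single)
    obtain h where h: "h \<in> products (shifts W ?S) (card ?S)" "h (W ! i) = W ! 0"
      using IH[of "W ! i"] nth_in_prefix_set[of i k] i assms(2) by auto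
    have "card ?S' = card ?S + 1"
      using S' y(2) by simp
    moreover have "h \<in> products (shifts W ?S') (card ?S)"
      using h(1) products_mono[OF sub order_refl] by blast
    ultimately have "h \<circ> ?g \<in> products (shifts W ?S') (card ?S')"
      using products_comp[OF _ g] by simp
    moreover have "(h \<circ> ?g) y = W ! 0"
      using d y h(2) by (simp add: cyc3_apply)
    ultimately show ?thesis
      by blast
  qed
qed

lemma prefix_reaches_head:
  assumes "3 \<le> k" "k \<le> length W" "y \<in> prefix_set k"
  shows "\<exists>h\<in>products (shifts W (prefix_set k)) (card (prefix_set k)). h y = W ! 0"
  using assms
proof (induction k arbitrary: y rule: nat_induct_at_least)
  case base
  then show ?case
    by (rule prefix3_reaches_head)
next
  case (Suc k)
  then show ?case
    using prefix_reaches_head_Suc[of k y] by simp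
qed

lemma shift_products_permutes:
  "finite S \<Longrightarrow> h \<in> products (shifts W S) L \<Longrightarrow> h permutes S \<and> evenperm h"
  by (rule products_permutes_even) (use shifts_closed in auto)

lemma shift_products_inv: "h \<in> products (shifts W S) L \<Longrightarrow> inv h \<in> products (shifts W S) L"
  by (rule products_inv) (use shifts_closed permutes_bij in auto)

lemma prefix_connected:
  assumes "3 \<le> k" "k \<le> length W" "x \<in> prefix_set k" "y \<in> prefix_set k"
  shows "\<exists>h\<in>products (shifts W (prefix_set k)) (2 * card (prefix_set k)). h y = x"
proof -
  let ?A = "shifts W (prefix_set k)"
  obtain hx where hx: "hx \<in> products ?A (card (prefix_set k))" "hx x = W ! 0"
    using prefix_reaches_head assms(1-3) by blast
  obtain hy where hy: "hy \<in> products ?A (card (prefix_set k))" "hy y = W ! 0"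
    using prefix_reaches_head assms(1,2,4) by blast
  have "hx permutes prefix_set k"
    using shift_products_permutes hx(1) by blast
  then have "inv hx (W ! 0) = x"
    using hx(2) permutes_inverses(2) by metis
  moreover have "inv hx \<circ> hy \<in> products ?A (2 * card (prefix_set k))"
    using products_comp[OF shift_products_inv[OF hx(1)] hy(1)] by (simp add: mult_2)
  ultimately show ?thesis
    using hy(2) by (intro bexI[of _ "inv hx \<circ> hy"]) auto
qed

lemma evenperm_in_shift_products_fresh:
  assumes "2 \<le> k" "k < length W" "W ! k \<notin> prefix_set k"
    and "p permutes prefix_set (Suc k)" "evenperm p"
    and IH: "\<And>r. r permutes prefix_set k \<Longrightarrow> evenperm r \<Longrightarrow>
      r \<in> products (shifts W (prefix_set k)) (3 * card (prefix_set k) ^ 2)"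
  shows "p \<in> products (shifts W (prefix_set (Suc k))) (3 * card (prefix_set (Suc k)) ^ 2)"
proof -
  let ?S = "prefix_set k" and ?S' = "prefix_set (Suc k)"
  have S': "?S' = insert (W ! k) ?S"
    using assms(2) by (rule prefix_set_Suc)
  let ?A = "shifts W ?S'"
  have p: "p \<in> products ?A (2 * card ?S' + 3 * card ?S ^ 2)"
  proof (rule even_products_insert)
    show "\<And>a. a \<in> ?A \<Longrightarrow> a permutes insert (W ! k) ?S \<and> evenperm a \<and> inv a \<in> ?A"
      using shifts_closed S' by simp
    show "\<And>y. y \<in> insert (W ! k) ?S \<Longrightarrow> \<exists>h\<in>products ?A (2 * card ?S'). h y = W ! k"
      using prefix_connected[of "Suc k"] assms(1,2) S' by simp
    show "\<And>r. r permutes ?S \<Longrightarrow> evenperm r \<Longrightarrow> r \<in> products ?A (3 * card ?S ^ 2)"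
      using IH products_mono[OF shifts_mono[of ?S ?S'] order_refl] S' by auto
  qed (use assms(4,5) S' in auto)
  have "card ?S' = card ?S + 1"
    using S' assms(3) by simp
  then have "2 * card ?S' + 3 * card ?S ^ 2 \<le> 3 * card ?S' ^ 2"
    by (simp add: power2_eq_square algebra_simps)
  then show ?thesis
    using p products_mono[OF order_refl] by blast
qed

lemma evenperm_in_shift_products:
  assumes "k \<le> length W" "p permutes prefix_set k" "evenperm p"
  shows "p \<in> products (shifts W (prefix_set k)) (3 * card (prefix_set k) ^ 2)"
  using assms
proof (induction k arbitrary: p)
  case 0
  then have "p = id"
    by simp
  then show ?case
    by (simp only: products_id)
next
  case (Suc k)
  let ?S = "prefix_set k" and ?S' = "prefix_set (Suc k)"
  have S': "?S' = insert (W ! k) ?S"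
    using Suc.prems(1) by (simp add: prefix_set_Suc)
  consider (short) "k < 2" | (repeated) "W ! k \<in> ?S" | (fresh) "2 \<le> k" "W ! k \<notin> ?S"
    by (meson not_less)
  then show ?case
  proof cases
    case short
    have "?S' \<subseteq> {W ! 0, W ! 1}"
      using short by (auto simp: in_set_conv_nth less_Suc_eq numeral_2_eq_2)
    then have "p = id"
      by (rule evenperm_permutes_doubleton[OF permutes_subset[OF Suc.prems(2)] Suc.prems(3)])
    then show ?thesis
      by (simp only: products_id)
  next
    case repeated
    then have "?S' = ?S"
      using S' by auto
    then show ?thesis
      using Suc.IH[of p] Suc.prems by simp
  next
    case fresh
    then show ?thesis
      using evenperm_in_shift_products_fresh[of k p] Suc by simp
  qed
qed

end

theorem lemma4:
  shows "\<exists>K::nat. \<forall>(n::nat) (W::nat list) (p::nat \<Rightarrow> nat).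
     set W = {1..n} \<longrightarrow>
     (\<forall>i. i + 2 < length W \<longrightarrow> distinct [W ! i, W ! (i + 1), W ! (i + 2)]) \<longrightarrow>
     p permutes {1..n} \<longrightarrow> evenperm p \<longrightarrow>
     (\<exists>fs. length fs \<le> K * n ^ 3 \<and>
           (\<forall>f\<in>set fs. f \<in> gens W \<or> (\<exists>c\<in>gens W. f = inv c)) \<and>
           p = foldr (\<circ>) fs id)"
proof (intro exI[of _ 3] allI impI)
  fix n :: nat and W :: "nat list" and p :: "nat \<Rightarrow> nat"
  assume set_W: "set W = {1..n}"
    and triples: "\<forall>i. i + 2 < length W \<longrightarrow> distinct [W ! i, W ! (i + 1), W ! (i + 2)]"
    and p: "p permutes {1..n}" "evenperm p"
  interpret triple_distinct W
    using triples by unfold_locales blast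
  have "p \<in> products (shifts W {1..n}) (3 * n ^ 2)"
    using evenperm_in_shift_products[of "length W" p] set_W p by simp
  then obtain fs where fs: "p = foldr (\<circ>) fs id" "set fs \<subseteq> shifts W {1..n}" "length fs \<le> 3 * n ^ 2"
    unfolding products_def by blast
  moreover have "\<forall>f\<in>set fs. f \<in> gens W \<or> (\<exists>c\<in>gens W. f = inv c)"
    using fs(2) unfolding shifts_def by blast
  moreover have "3 * n ^ 2 \<le> 3 * n ^ 3"
    by (cases n) (simp_all add: power_increasing)
  ultimately show "\<exists>fs. length fs \<le> 3 * n ^ 3 \<and>
      (\<forall>f\<in>set fs. f \<in> gens W \<or> (\<exists>c\<in>gens W. f = inv c)) \<and> p = foldr (\<circ>) fs id"
    by (intro exI[of _ fs]) auto
qed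

end
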